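(* Let $X$ be a compact metric space, $T:X\to X$ continuous, $\Phi=\{\phi_n\}$ a supadditive potential on $X$, $k$ a positive integer, and $\mu$ an ergodic $T$-invariant Borel probability measure. Then there is a constant $C$ such that for every $\eta>0$ there exists $\epsilon_0>0$ such that for all $0<\epsilon<\epsilon_0$, $n\ge1$ and $\delta\in(0,1)$, \[ P_\mu(T,\Phi,n,\epsilon,\delta)\ge e^{-n\eta-C}\,P_\mu\big(T,\tfrac{\phi_k}{k},n,\epsilon,\delta\big), \] and consequently $P_\mu(T,\Phi)\ge P_\mu\big(T,\tfrac{\phi_k}{k}\big)$.
   Context: $B_n(x,\epsilon)=\{y:d(T^ix,T^iy)<\epsilon,\ 0\le i\le n-1\}$. Supadditive potential: continuous $\phi_n$ with $\phi_{n+m}(x)\ge\phi_n(x)+\phi_m(T^nx)$. $F\subseteq X$ is $(n,\epsilon,\delta)$-spanning if $\mu(\bigcup_{x\in F}B_n(x,\epsilon))\ge1-\delta$. For $\Phi$: $P_\mu(T,\Phi,n,\epsilon,\delta)=\inf\{\sum_{x\in F}e^{\phi_n(x)}:F\ (n,\epsilon,\delta)\text{-spanning}\}$ and $P_\mu(T,\Phi)=\lim_{\delta\to0}\lim_{\epsilon\to0}\limsup_{n\to\infty}\frac1n\log P_\mu(T,\Phi,n,\epsilon,\delta)$. For a continuous function $\psi$ with $g_n=\sum_{i=0}^{n-1}\psi\circ T^i$: $P_\mu(T,\psi,n,\epsilon,\delta)=\inf\{\sum_{x\in F}\exp(\sup_{y\in B_n(x,\epsilon)}g_n(y)):F\ (n,\epsilon,\delta)\text{-spanning}\}$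 and $P_\mu(T,\psi)=\lim_{\delta\to0}\liminf_{\epsilon\to0}\limsup_{n\to\infty}\frac1n\log P_\mu(T,\psi,n,\epsilon,\delta)$. *)

theory Defs
  imports "HOL-Probability.Probability"
begin

definition bowen_ball :: "('a::metric_space \<Rightarrow> 'a) \<Rightarrow> nat \<Rightarrow> 'a \<Rightarrow> real \<Rightarrow> 'a set" where
  "bowen_ball T n x \<epsilon> = {y. \<forall>i<n. dist ((T ^^ i) x) ((T ^^ i) y) < \<epsilon>}"

definition spanning :: "'a measure \<Rightarrow> ('a::metric_space \<Rightarrow> 'a) \<Rightarrow> nat \<Rightarrow> real \<Rightarrow> real \<Rightarrow> 'a set \<Rightarrow> bool" where
  "spanning M T n \<epsilon> \<delta> F \<longleftrightarrow> finite F \<and>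
     measure M (\<Union>x\<in>F. bowen_ball T n x \<epsilon>) \<ge> 1 - \<delta>"

definition supadditive_potential :: "('a::metric_space \<Rightarrow> 'a) \<Rightarrow> (nat \<Rightarrow> 'a \<Rightarrow> real) \<Rightarrow> bool" where
  "supadditive_potential T \<phi> \<longleftrightarrow>
     (\<forall>n\<ge>1. continuous_on UNIV (\<phi> n)) \<and>
     (\<forall>n\<ge>1. \<forall>m\<ge>1. \<forall>x. \<phi> (n + m) x \<ge> \<phi> n x + \<phi> m ((T ^^ n) x))"

definition pressure_pot_n :: "'a measure \<Rightarrow> ('a::metric_space \<Rightarrow> 'a) \<Rightarrow> (nat \<Rightarrow> 'a \<Rightarrow> real)
    \<Rightarrow> nat \<Rightarrow> real \<Rightarrow> real \<Rightarrow> real" where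
  "pressure_pot_n M T \<phi> n \<epsilon> \<delta> =
     Inf {(\<Sum>x\<in>F. exp (\<phi> n x)) | F. spanning M T n \<epsilon> \<delta> F}"

definition birkhoff_sum :: "('a \<Rightarrow> 'a) \<Rightarrow> ('a \<Rightarrow> real) \<Rightarrow> nat \<Rightarrow> 'a \<Rightarrow> real" where
  "birkhoff_sum T \<psi> n y = (\<Sum>i<n. \<psi> ((T ^^ i) y))"

definition pressure_fun_n :: "'a measure \<Rightarrow> ('a::metric_space \<Rightarrow> 'a) \<Rightarrow> ('a \<Rightarrow> real)
    \<Rightarrow> nat \<Rightarrow> real \<Rightarrow> real \<Rightarrow> real" where
  "pressure_fun_n M T \<psi> n \<epsilon> \<delta> =
     Inf {(\<Sum>x\<in>F. exp (SUP y\<in>bowen_ball T n x \<epsilon>. birkhoff_sum T \<psi> n y)) | F. spanning M T n \<epsilon> \<delta> F}"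

definition pressure_pot :: "'a measure \<Rightarrow> ('a::metric_space \<Rightarrow> 'a) \<Rightarrow> (nat \<Rightarrow> 'a \<Rightarrow> real) \<Rightarrow> ereal" where
  "pressure_pot M T \<phi> =
     Lim (at_right 0) (\<lambda>\<delta>. Lim (at_right 0) (\<lambda>\<epsilon>.
        limsup (\<lambda>n. ereal (ln (pressure_pot_n M T \<phi> n \<epsilon> \<delta>) / real n))))"

definition pressure_fun :: "'a measure \<Rightarrow> ('a::metric_space \<Rightarrow> 'a) \<Rightarrow> ('a \<Rightarrow> real) \<Rightarrow> ereal" where
  "pressure_fun M T \<psi> =
     Lim (at_right 0) (\<lambda>\<delta>. Liminf (at_right 0) (\<lambda>\<epsilon>.
        limsup (\<lambda>n. ereal (ln (pressure_fun_n M T \<psi> n \<epsilon> \<delta>) / real n))))"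

definition invariant_measure :: "'a measure \<Rightarrow> ('a \<Rightarrow> 'a) \<Rightarrow> bool" where
  "invariant_measure M T \<longleftrightarrow> T \<in> measurable M M \<and> distr M M T = M"

definition ergodic :: "'a measure \<Rightarrow> ('a \<Rightarrow> 'a) \<Rightarrow> bool" where
  "ergodic M T \<longleftrightarrow> invariant_measure M T \<and>
     (\<forall>A\<in>sets M. T -` A \<inter> space M = A \<longrightarrow> measure M A = 0 \<or> measure M A = 1)"

end

theory Submission
  imports Defs
begin

text \<open>
  Cut the orbit segment \<open>x, T x, \<dots>, T\<^sup>n\<^sup>-\<^sup>1 x\<close> into consecutive blocks of length \<open>k\<close>,
  starting at each of the \<open>k\<close> possible offsets. For every offset, supadditivity bounds the sum
  of \<open>\<phi>\<^sub>k\<close> over the blocks by \<open>\<phi>\<^sub>n(x)\<close> up to two boundary terms; summing over the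
  offsets shows that the Birkhoff sum of \<open>\<phi>\<^sub>k/k\<close> is at most \<open>\<phi>\<^sub>n(x) + C\<close>, with \<open>C\<close>
  depending only on \<open>\<phi>\<^sub>1, \<dots>, \<phi>\<^sub>2\<^sub>k\<close>. By uniform continuity of \<open>\<phi>\<^sub>k/k\<close>, on a
  Bowen ball of small radius the Birkhoff sum exceeds its value at the centre by at most
  \<open>n\<eta>\<close>. Hence every term of a spanning sum for \<open>\<Phi>\<close> dominates \<open>e\<^sup>-\<^sup>n\<^sup>\<eta>\<^sup>-\<^sup>C\<close> times
  the corresponding term for \<open>\<phi>\<^sub>k/k\<close>, and taking infima over spanning sets gives the
  finite-scale inequality. The pressure inequality follows after taking logarithms, dividing
  by \<open>n\<close> and passing to the limits.
\<close>

section \<open>Orbit sums of supadditive potentials\<close>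

lemma supadditive_potentialD:
  "supadditive_potential T \<phi> \<Longrightarrow> 1 \<le> a \<Longrightarrow> 1 \<le> b \<Longrightarrow> \<phi> a x + \<phi> b ((T ^^ a) x) \<le> \<phi> (a + b) x"
  unfolding supadditive_potential_def by blast

lemma continuous_on_supadditive_potential:
  "supadditive_potential T \<phi> \<Longrightarrow> n \<ge> 1 \<Longrightarrow> continuous_on UNIV (\<phi> n)"
  unfolding supadditive_potential_def by blast

lemma supadditive_potential_blocks:
  assumes sp: "supadditive_potential T \<phi>" and k: "k \<ge> 1" and r: "r \<ge> 1"
  shows "(\<Sum>l<q. \<phi> k ((T ^^ (l * k)) x)) + \<phi> r ((T ^^ (q * k)) x) \<le> \<phi> (q * k + r) x"
proof (induction q arbitrary: x)
  case 0
  then show ?case by simp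
next
  case (Suc q)
  have "\<phi> k x + \<phi> (q * k + r) ((T ^^ k) x) \<le> \<phi> (k + (q * k + r)) x"
    using k r by (intro supadditive_potentialD[OF sp]) auto
  moreover have "(\<Sum>l<Suc q. \<phi> k ((T ^^ (l * k)) x))
      = \<phi> k x + (\<Sum>l<q. \<phi> k ((T ^^ (l * k)) ((T ^^ k) x)))"
    unfolding sum.lessThan_Suc_shift by (simp add: funpow_add add.commute[of k])
  moreover have "(T ^^ (Suc q * k)) x = (T ^^ (q * k)) ((T ^^ k) x)"
    by (simp add: funpow_add add.commute[of k])
  ultimately show ?case using Suc.IH[of "(T ^^ k) x"] by (simp add: algebra_simps)
qed

lemma sum_lessThan_mult_interleave:
  fixes g :: "nat \<Rightarrow> 'b::comm_monoid_add"
  shows "(\<Sum>i<q * k. g i) = (\<Sum>j<k. \<Sum>l<q. g (l * k + j))"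
proof -
  have "(\<Sum>i<q * k. g i) = (\<Sum>l<q. \<Sum>i\<in>{l * k..<l * k + k}. g i)"
    by (rule sum.nat_group[symmetric])
  also have "\<dots> = (\<Sum>l<q. \<Sum>j<k. g (l * k + j))"
    using sum.shift_bounds_nat_ivl[of g 0 "_ * k" k]
    by (simp add: atLeast0LessThan add.commute)
  also have "\<dots> = (\<Sum>j<k. \<Sum>l<q. g (l * k + j))"
    by (rule sum.swap)
  finally show ?thesis .
qed

lemma supadditive_potential_shifted_blocks:
  assumes sp: "supadditive_potential T \<phi>" and k: "k \<ge> 1" and j: "j < k"
    and n: "q * k + k < n" "n \<le> q * k + 2 * k"
    and B: "\<forall>i\<in>{1..2 * k}. \<forall>x. \<bar>\<phi> i x\<bar> \<le> B"
  shows "(\<Sum>l<q. \<phi> k ((T ^^ (l * k + Suc j)) x)) \<le> \<phi> n x + 2 * B"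
proof -
  define r where "r = n - Suc j - q * k"
  define y where "y = (T ^^ Suc j) x"
  have r: "r \<ge> 1" "r \<le> 2 * k" and n_eq: "n = Suc j + (q * k + r)"
    using j n unfolding r_def by auto
  have "\<phi> (Suc j) x + \<phi> (q * k + r) y \<le> \<phi> n x"
    unfolding n_eq y_def using r by (intro supadditive_potentialD[OF sp]) auto
  moreover have "(\<Sum>l<q. \<phi> k ((T ^^ (l * k)) y)) + \<phi> r ((T ^^ (q * k)) y) \<le> \<phi> (q * k + r) y"
    by (rule supadditive_potential_blocks[OF sp k r(1)])
  moreover have "(T ^^ (l * k)) y = (T ^^ (l * k + Suc j)) x" for l
    unfolding y_def by (simp only: funpow_add comp_def)
  moreover have "\<bar>\<phi> (Suc j) x\<bar> \<le> B" "\<bar>\<phi> r ((T ^^ (q * k)) y)\<bar> \<le> B"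
    using B j r by auto
  ultimately show ?thesis by (simp add: abs_le_iff)
qed

lemma orbit_sum_le_supadditive_potential:
  assumes sp: "supadditive_potential T \<phi>" and k: "k \<ge> 1" and n: "k < n"
    and B: "\<forall>i\<in>{1..2 * k}. \<forall>x. \<bar>\<phi> i x\<bar> \<le> B"
  shows "(\<Sum>i<n. \<phi> k ((T ^^ i) x)) \<le> real k * (\<phi> n x + 4 * B)"
proof -
  define f where "f i = \<phi> k ((T ^^ i) x)" for i
  define q where "q = (n - 1) div k - 1"
  have B0: "0 \<le> B" using B k by force
  have f: "f i \<le> B" for i using B k unfolding f_def by (auto simp: abs_le_iff)
  have q: "q * k + k < n" "n \<le> q * k + 2 * k"
  proof -
    have "1 \<le> (n - 1) div k" using n k by (simp add: Suc_le_eq div_greater_zero_iff)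
    then have "Suc q * k + (n - 1) mod k = n - 1" unfolding q_def by simp
    moreover have "(n - 1) mod k < k" using k by simp
    ultimately show "q * k + k < n" "n \<le> q * k + 2 * k" by auto
  qed
  have "(\<Sum>i<n. f i) = f 0 + (\<Sum>i<n - 1. f (Suc i))"
    using n sum.lessThan_Suc_shift[of f "n - 1"] by simp
  also have "(\<Sum>i<n - 1. f (Suc i)) = (\<Sum>i<q * k. f (Suc i)) + (\<Sum>i\<in>{q * k..<n - 1}. f (Suc i))"
    using sum.atLeastLessThan_concat[of 0 "q * k" "n - 1" "\<lambda>i. f (Suc i)"] q
    by (simp add: atLeast0LessThan)
  also have "(\<Sum>i<q * k. f (Suc i)) = (\<Sum>j<k. \<Sum>l<q. f (l * k + Suc j))"
    by (simp add: sum_lessThan_mult_interleave)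
  also have "\<dots> \<le> (\<Sum>j<k. \<phi> n x + 2 * B)"
    unfolding f_def by (intro sum_mono supadditive_potential_shifted_blocks[OF sp k _ q B]) simp
  also have "(\<Sum>i\<in>{q * k..<n - 1}. f (Suc i)) \<le> real (n - 1 - q * k) * B"
    using sum_mono[of "{q * k..<n - 1}" "\<lambda>i. f (Suc i)" "\<lambda>_. B"] f by simp
  also have "real (n - 1 - q * k) * B \<le> real (2 * k - 1) * B"
  proof (rule mult_right_mono[OF _ B0])
    show "real (n - 1 - q * k) \<le> real (2 * k - 1)" using q by linarith
  qed
  finally show ?thesis using f[of 0] k unfolding f_def by (simp add: algebra_simps of_nat_diff)
qed

lemma birkhoff_sum_le_supadditive_potential:
  assumes sp: "supadditive_potential T \<phi>" and k: "k \<ge> 1" and n: "n \<ge> 1"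
    and B: "\<forall>i\<in>{1..2 * k}. \<forall>x. \<bar>\<phi> i x\<bar> \<le> B"
  shows "birkhoff_sum T (\<lambda>x. \<phi> k x / real k) n x \<le> \<phi> n x + 4 * B"
proof -
  have "(\<Sum>i<n. \<phi> k ((T ^^ i) x)) \<le> real k * (\<phi> n x + 4 * B)"
  proof (cases "n \<le> k")
    case True
    have "\<bar>\<phi> k ((T ^^ i) x)\<bar> \<le> B" "\<bar>\<phi> n x\<bar> \<le> B" for i
      using B k n True by auto
    then have "(\<Sum>i<n. \<phi> k ((T ^^ i) x)) \<le> real n * B" "0 \<le> B" "B \<le> \<phi> n x + 4 * B"
      using sum_mono[of "{..<n}" "\<lambda>i. \<phi> k ((T ^^ i) x)" "\<lambda>_. B"] by (auto simp: abs_le_iff)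
    then show ?thesis
      using True by (meson mult_mono of_nat_0_le_iff of_nat_le_iff order_trans)
  next
    case False
    then show ?thesis by (intro orbit_sum_le_supadditive_potential[OF sp k _ B]) simp
  qed
  then show ?thesis
    using k unfolding birkhoff_sum_def
    by (simp add: sum_divide_distrib[symmetric] divide_le_eq mult.commute)
qed

section \<open>Bowen balls, spanning sets and Birkhoff sums\<close>

lemma continuous_on_funpow:
  fixes T :: "'a::topological_space \<Rightarrow> 'a"
  assumes "continuous_on UNIV T"
  shows "continuous_on UNIV (T ^^ i)"
proof (induction i)
  case 0
  then show ?case by (simp add: id_def continuous_on_id)
next
  case (Suc i)
  have "continuous_on UNIV (\<lambda>x. T ((T ^^ i) x))"
    by (rule continuous_on_compose2[OF assms Suc]) simp
  then show ?case by (simp add: comp_def)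
qed

lemma compact_UNIV_continuous_bounded:
  fixes f :: "'a::metric_space \<Rightarrow> real"
  assumes "compact (UNIV :: 'a set)" "continuous_on UNIV f"
  shows "\<exists>B. \<forall>x. \<bar>f x\<bar> \<le> B"
  using compact_imp_bounded[OF compact_continuous_image[OF assms(2,1)]]
  unfolding bounded_iff by auto

lemma compact_UNIV_continuous_bounded_family:
  fixes f :: "'i \<Rightarrow> 'a::metric_space \<Rightarrow> real"
  assumes "compact (UNIV :: 'a set)" "finite J" "\<forall>j\<in>J. continuous_on UNIV (f j)"
  shows "\<exists>B. \<forall>j\<in>J. \<forall>x. \<bar>f j x\<bar> \<le> B"
proof -
  have "compact (range (f j))" if "j \<in> J" for j
    using assms(3) that by (intro compact_continuous_image assms(1)) simp
  then have "compact (\<Union>j\<in>J. range (f j))"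
    using assms(2) by (rule compact_UN[rotated])
  then have "bounded (\<Union>j\<in>J. range (f j))"
    by (rule compact_imp_bounded)
  then obtain B where B: "\<forall>y\<in>(\<Union>j\<in>J. range (f j)). norm y \<le> B"
    unfolding bounded_iff by blast
  show ?thesis
  proof (intro exI ballI allI)
    fix j x assume "j \<in> J"
    then have "f j x \<in> (\<Union>j\<in>J. range (f j))" by blast
    then show "\<bar>f j x\<bar> \<le> B" using B by (metis real_norm_def)
  qed
qed

lemma compact_UNIV_uniform_modulus:
  fixes f :: "'a::metric_space \<Rightarrow> real"
  assumes "compact (UNIV :: 'a set)" "continuous_on UNIV f" "\<eta> > 0"
  obtains d where "d > 0" "\<forall>x y. dist x y < d \<longrightarrow> f y \<le> f x + \<eta>"
proof -
  have "uniformly_continuous_on UNIV f"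
    using assms(1,2) by (rule compact_uniformly_continuous[rotated])
  then obtain d where "d > 0" and d: "\<forall>x\<in>UNIV. \<forall>y\<in>UNIV. dist y x < d \<longrightarrow> dist (f y) (f x) < \<eta>"
    using assms(3) unfolding uniformly_continuous_on_def by blast
  have "f y \<le> f x + \<eta>" if "dist x y < d" for x y
    using d[rule_format, of x y] that by (simp add: dist_commute dist_real_def abs_less_iff)
  with \<open>d > 0\<close> show ?thesis using that by blast
qed

lemma bowen_ball_center: "\<epsilon> > 0 \<Longrightarrow> x \<in> bowen_ball T n x \<epsilon>"
  by (simp add: bowen_ball_def)

lemma bowen_ball_mono: "\<epsilon>1 \<le> \<epsilon>2 \<Longrightarrow> bowen_ball T n x \<epsilon>1 \<subseteq> bowen_ball T n x \<epsilon>2"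
  by (auto simp: bowen_ball_def)

lemma open_bowen_ball:
  assumes "continuous_on UNIV T"
  shows "open (bowen_ball T n x \<epsilon>)"
proof -
  have "bowen_ball T n x \<epsilon> = (\<Inter>i<n. (T ^^ i) -` ball ((T ^^ i) x) \<epsilon>)"
    by (auto simp: bowen_ball_def)
  moreover have "open ((T ^^ i) -` ball ((T ^^ i) x) \<epsilon>)" for i
    using continuous_on_funpow[OF assms] by (simp add: continuous_on_open_vimage)
  ultimately show ?thesis by auto
qed

lemma birkhoff_sum_abs_le:
  assumes "\<And>y. \<bar>\<psi> y\<bar> \<le> B"
  shows "\<bar>birkhoff_sum T \<psi> n x\<bar> \<le> real n * B"
proof -
  have "\<bar>birkhoff_sum T \<psi> n x\<bar> \<le> (\<Sum>i<n. \<bar>\<psi> ((T ^^ i) x)\<bar>)"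
    unfolding birkhoff_sum_def by (rule sum_abs)
  also have "\<dots> \<le> (\<Sum>i<n. B)" by (intro sum_mono assms)
  finally show ?thesis by simp
qed

lemma birkhoff_sum_bowen_ball_le:
  assumes \<psi>: "\<forall>x y. dist x y < \<epsilon> \<longrightarrow> \<psi> y \<le> \<psi> x + \<eta>" and y: "y \<in> bowen_ball T n x \<epsilon>"
  shows "birkhoff_sum T \<psi> n y \<le> birkhoff_sum T \<psi> n x + real n * \<eta>"
proof -
  have "(\<Sum>i<n. \<psi> ((T ^^ i) y)) \<le> (\<Sum>i<n. \<psi> ((T ^^ i) x) + \<eta>)"
    using y \<psi> by (intro sum_mono) (simp add: bowen_ball_def)
  then show ?thesis unfolding birkhoff_sum_def by (simp add: sum.distrib)
qed

lemma SUP_birkhoff_sum_bowen_ball_le: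
  assumes "\<forall>x y. dist x y < \<epsilon> \<longrightarrow> \<psi> y \<le> \<psi> x + \<eta>" "\<epsilon> > 0"
  shows "(SUP y\<in>bowen_ball T n x \<epsilon>. birkhoff_sum T \<psi> n y) \<le> birkhoff_sum T \<psi> n x + real n * \<eta>"
proof (rule cSUP_least)
  show "bowen_ball T n x \<epsilon> \<noteq> {}" using bowen_ball_center[OF assms(2)] by blast
next
  fix y assume "y \<in> bowen_ball T n x \<epsilon>"
  then show "birkhoff_sum T \<psi> n y \<le> birkhoff_sum T \<psi> n x + real n * \<eta>"
    by (rule birkhoff_sum_bowen_ball_le[OF assms(1)])
qed

lemma birkhoff_sum_le_SUP_bowen_ball:
  assumes "\<And>y. \<bar>\<psi> y\<bar> \<le> B" "\<epsilon> > 0"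
  shows "birkhoff_sum T \<psi> n x \<le> (SUP y\<in>bowen_ball T n x \<epsilon>. birkhoff_sum T \<psi> n y)"
proof (rule cSUP_upper[OF bowen_ball_center[OF assms(2)]])
  have "birkhoff_sum T \<psi> n y \<le> real n * B" for y
    using birkhoff_sum_abs_le[of \<psi> B T n y, OF assms(1)] by (simp add: abs_le_iff)
  then show "bdd_above ((\<lambda>y. birkhoff_sum T \<psi> n y) ` bowen_ball T n x \<epsilon>)"
    by (intro bdd_aboveI2)
qed

lemma spanning_mono_delta:
  "\<delta>1 \<le> \<delta>2 \<Longrightarrow> spanning M T n \<epsilon> \<delta>1 F \<Longrightarrow> spanning M T n \<epsilon> \<delta>2 F"
  unfolding spanning_def by auto

lemma spanning_nonempty: "\<delta> < 1 \<Longrightarrow> spanning M T n \<epsilon> \<delta> F \<Longrightarrow> F \<noteq> {}"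
  unfolding spanning_def by auto

lemma bdd_below_sum_exp: "bdd_below {\<Sum>x\<in>F. exp (h x :: real) | F. P F}"
  by (rule bdd_belowI[of _ 0]) (auto intro: sum_nonneg)

lemma Inf_sum_exp_pos:
  fixes h :: "'a \<Rightarrow> real"
  assumes "\<exists>F. P F" "\<And>F. P F \<Longrightarrow> finite F \<and> F \<noteq> {}" "\<And>x. c \<le> h x"
  shows "0 < Inf {\<Sum>x\<in>F. exp (h x) | F. P F}"
proof -
  have "exp c \<le> Inf {\<Sum>x\<in>F. exp (h x) | F. P F}"
  proof (rule cInf_greatest)
    show "{\<Sum>x\<in>F. exp (h x) | F. P F} \<noteq> {}" using assms(1) by blast
  next
    fix s assume "s \<in> {\<Sum>x\<in>F. exp (h x) | F. P F}"
    then obtain F where F: "P F" "s = (\<Sum>x\<in>F. exp (h x))" by blast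
    then obtain x where x: "x \<in> F" using assms(2) by blast
    have "exp c \<le> exp (h x)" using assms(3) by simp
    also have "\<dots> \<le> s" unfolding F(2) using x assms(2)[OF F(1)] by (intro member_le_sum) auto
    finally show "exp c \<le> s" .
  qed
  then show ?thesis using exp_gt_zero[of c] by linarith
qed

lemma Inf_sum_exp_antimono:
  fixes h :: "'a \<Rightarrow> real"
  assumes "\<And>F. P F \<Longrightarrow> Q F" "\<exists>F. P F"
  shows "Inf {\<Sum>x\<in>F. exp (h x) | F. Q F} \<le> Inf {\<Sum>x\<in>F. exp (h x) | F. P F}"
  using assms by (intro cInf_superset_mono bdd_below_sum_exp) auto

lemma Inf_sum_exp_shift_le:
  fixes g h :: "'a \<Rightarrow> real"
  assumes "\<exists>F. P F" "\<And>x. a + g x \<le> h x"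
  shows "exp a * Inf {\<Sum>x\<in>F. exp (g x) | F. P F} \<le> Inf {\<Sum>x\<in>F. exp (h x) | F. P F}"
proof (rule cInf_greatest)
  show "{\<Sum>x\<in>F. exp (h x) | F. P F} \<noteq> {}" using assms(1) by blast
next
  fix s assume "s \<in> {\<Sum>x\<in>F. exp (h x) | F. P F}"
  then obtain F where F: "P F" "s = (\<Sum>x\<in>F. exp (h x))" by blast
  have "Inf {\<Sum>x\<in>F. exp (g x) | F. P F} \<le> (\<Sum>x\<in>F. exp (g x))"
    using F(1) by (intro cInf_lower bdd_below_sum_exp) blast
  then have "exp a * Inf {\<Sum>x\<in>F. exp (g x) | F. P F} \<le> exp a * (\<Sum>x\<in>F. exp (g x))"
    by simp
  also have "\<dots> = (\<Sum>x\<in>F. exp a * exp (g x))"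
    by (rule sum_distrib_left)
  also have "\<dots> \<le> s"
    unfolding F(2) using assms(2) by (intro sum_mono) (simp flip: exp_add)
  finally show "exp a * Inf {\<Sum>x\<in>F. exp (g x) | F. P F} \<le> s" .
qed

section \<open>Limits at zero\<close>

lemma Lim_at_right_0_antimono:
  fixes f :: "real \<Rightarrow> ereal"
  assumes c: "c > 0" and antimono: "\<And>x y. 0 < x \<Longrightarrow> x \<le> y \<Longrightarrow> y < c \<Longrightarrow> f y \<le> f x"
  shows "Lim (at_right 0) f = (SUP x\<in>{0<..<c}. f x)"
proof (rule tendsto_Lim)
  show "(f \<longlongrightarrow> (SUP x\<in>{0<..<c}. f x)) (at_right 0)"
  proof (rule order_tendstoI)
    fix y assume "y < (SUP x\<in>{0<..<c}. f x)"
    then obtain x0 where x0: "x0 \<in> {0<..<c}" "y < f x0" by (auto simp: less_SUP_iff)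
    have "eventually (\<lambda>x. x \<in> {0<..<x0}) (at_right (0::real))"
      using x0 by (intro eventually_at_right_real) simp
    then show "eventually (\<lambda>x. y < f x) (at_right 0)"
      by eventually_elim (use x0 antimono[of _ x0] in force)
  next
    fix y assume "(SUP x\<in>{0<..<c}. f x) < y"
    moreover have "eventually (\<lambda>x. x \<in> {0<..<c}) (at_right (0::real))"
      using c by (intro eventually_at_right_real) simp
    ultimately show "eventually (\<lambda>x. f x < y) (at_right 0)"
      by (elim eventually_mono) (meson SUP_upper order.strict_trans1)
  qed
qed simp

lemma Liminf_at_right_0_le_SUP:
  fixes f g :: "real \<Rightarrow> ereal"
  assumes close: "\<And>e. e > 0 \<Longrightarrow> \<forall>\<^sub>F x in at_right 0. f x \<le> g x + ereal e" and c: "c > 0"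
  shows "Liminf (at_right 0) f \<le> (SUP x\<in>{0<..<c}. g x)"
proof (rule ereal_le_epsilon2)
  fix e :: real assume "e > 0"
  have "\<forall>\<^sub>F x in at_right 0. x \<in> {0<..<c}"
    using c by (intro eventually_at_right_real) simp
  with close[OF \<open>e > 0\<close>] have "\<forall>\<^sub>F x in at_right 0. f x \<le> (SUP x\<in>{0<..<c}. g x) + ereal e"
    by eventually_elim (meson SUP_upper add_right_mono order_trans)
  then have "Limsup (at_right 0) f \<le> (SUP x\<in>{0<..<c}. g x) + ereal e"
    by (rule Limsup_bounded)
  then show "Liminf (at_right 0) f \<le> (SUP x\<in>{0<..<c}. g x) + ereal e"
    using Liminf_le_Limsup[of "at_right (0::real)" f] by simp
qed

lemma limsup_ln_div_mono:
  fixes u v :: "nat \<Rightarrow> real"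
  assumes "\<And>n. n \<ge> 1 \<Longrightarrow> 0 < u n" "\<And>n. n \<ge> 1 \<Longrightarrow> u n \<le> v n"
  shows "limsup (\<lambda>n. ereal (ln (u n) / real n)) \<le> limsup (\<lambda>n. ereal (ln (v n) / real n))"
proof (intro Limsup_mono always_eventually allI)
  fix n :: nat
  show "ereal (ln (u n) / real n) \<le> ereal (ln (v n) / real n)"
  proof (cases "n = 0")
    case False
    then have "ln (u n) \<le> ln (v n)" using assms[of n] by simp
    then show ?thesis by (simp add: divide_right_mono)
  qed simp
qed

lemma limsup_ln_div_le_add:
  fixes u v :: "nat \<Rightarrow> real"
  assumes pos: "\<And>n. n \<ge> 1 \<Longrightarrow> 0 < u n" and le: "\<And>n. n \<ge> 1 \<Longrightarrow> exp (- real n * \<eta> - C) * u n \<le> v n"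
  shows "limsup (\<lambda>n. ereal (ln (u n) / real n)) \<le> limsup (\<lambda>n. ereal (ln (v n) / real n)) + ereal \<eta>"
proof -
  have "\<forall>\<^sub>F n in sequentially. ereal (ln (u n) / real n) \<le> ereal (\<eta> + C / real n) + ereal (ln (v n) / real n)"
    unfolding eventually_sequentially
  proof (intro exI allI impI)
    fix n :: nat assume n: "n \<ge> 1"
    have "0 < exp (- real n * \<eta> - C) * u n" using pos[OF n] by simp
    then have "ln (exp (- real n * \<eta> - C) * u n) \<le> ln (v n)" using le[OF n] by simp
    then have "ln (u n) \<le> real n * \<eta> + C + ln (v n)" using pos[OF n] by (simp add: ln_mult)
    then have "ln (u n) / real n \<le> (real n * \<eta> + C + ln (v n)) / real n"
      by (simp add: divide_right_mono)
    also have "\<dots> = \<eta> + C / real n + ln (v n) / real n"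
      using n by (simp add: field_simps)
    finally show "ereal (ln (u n) / real n) \<le> ereal (\<eta> + C / real n) + ereal (ln (v n) / real n)"
      by simp
  qed
  then have "limsup (\<lambda>n. ereal (ln (u n) / real n))
      \<le> limsup (\<lambda>n. ereal (\<eta> + C / real n) + ereal (ln (v n) / real n))"
    by (rule Limsup_mono)
  also have "\<dots> = ereal \<eta> + limsup (\<lambda>n. ereal (ln (v n) / real n))"
  proof (rule ereal_limsup_lim_add)
    have "(\<lambda>n. \<eta> + C / real n) \<longlonglongrightarrow> \<eta> + 0"
      by (intro tendsto_add tendsto_const lim_const_over_n)
    then show "(\<lambda>n. ereal (\<eta> + C / real n)) \<longlonglongrightarrow> ereal \<eta>"
      by (simp add: lim_ereal)
  qed simp
  finally show ?thesis by (simp add: add.commute)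
qed

section \<open>Pressures\<close>

definition pressure_pot_limsup :: "'a measure \<Rightarrow> ('a::metric_space \<Rightarrow> 'a) \<Rightarrow> (nat \<Rightarrow> 'a \<Rightarrow> real)
    \<Rightarrow> real \<Rightarrow> real \<Rightarrow> ereal" where
  "pressure_pot_limsup M T \<phi> \<epsilon> \<delta> = limsup (\<lambda>n. ereal (ln (pressure_pot_n M T \<phi> n \<epsilon> \<delta>) / real n))"

definition pressure_fun_limsup :: "'a measure \<Rightarrow> ('a::metric_space \<Rightarrow> 'a) \<Rightarrow> ('a \<Rightarrow> real)
    \<Rightarrow> real \<Rightarrow> real \<Rightarrow> ereal" where
  "pressure_fun_limsup M T \<psi> \<epsilon> \<delta> = limsup (\<lambda>n. ereal (ln (pressure_fun_n M T \<psi> n \<epsilon> \<delta>) / real n))"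

definition dominates_pressure_n :: "'a measure \<Rightarrow> ('a::metric_space \<Rightarrow> 'a) \<Rightarrow> (nat \<Rightarrow> 'a \<Rightarrow> real)
    \<Rightarrow> ('a \<Rightarrow> real) \<Rightarrow> bool" where
  "dominates_pressure_n M T \<phi> \<psi> \<longleftrightarrow>
     (\<exists>C. \<forall>\<eta>>0. \<exists>\<epsilon>0>0. \<forall>\<epsilon> n \<delta>. 0 < \<epsilon> \<and> \<epsilon> < \<epsilon>0 \<and> n \<ge> 1 \<and> 0 < \<delta> \<and> \<delta> < 1 \<longrightarrow>
        pressure_pot_n M T \<phi> n \<epsilon> \<delta> \<ge> exp (- real n * \<eta> - C) * pressure_fun_n M T \<psi> n \<epsilon> \<delta>)"

locale compact_measured_system =
  fixes M :: "'a::metric_space measure" and T :: "'a \<Rightarrow> 'a"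
  assumes compact_UNIV: "compact (UNIV :: 'a set)"
    and continuous_T: "continuous_on UNIV T"
    and prob_space_M: "prob_space M"
    and sets_M: "sets M = sets borel"
begin

lemma spanning_exists:
  assumes "\<epsilon> > 0" "0 \<le> \<delta>"
  shows "\<exists>F. spanning M T n \<epsilon> \<delta> F"
proof -
  have "open (bowen_ball T n x \<epsilon>)" for x
    by (rule open_bowen_ball[OF continuous_T])
  moreover have "UNIV \<subseteq> (\<Union>x\<in>UNIV. bowen_ball T n x \<epsilon>)"
    using bowen_ball_center[OF assms(1)] by blast
  ultimately obtain F where F: "finite F" "UNIV \<subseteq> (\<Union>x\<in>F. bowen_ball T n x \<epsilon>)"
    using compactE_image[OF compact_UNIV] by metis
  then have "(\<Union>x\<in>F. bowen_ball T n x \<epsilon>) = space M"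
    using sets_eq_imp_space_eq[OF sets_M] by auto
  then show ?thesis
    using F(1) assms(2) prob_space.prob_space[OF prob_space_M] unfolding spanning_def by auto
qed

lemma spanning_mono_eps:
  assumes "\<epsilon>1 \<le> \<epsilon>2" "spanning M T n \<epsilon>1 \<delta> F"
  shows "spanning M T n \<epsilon>2 \<delta> F"
proof -
  have "open (\<Union>x\<in>F. bowen_ball T n x \<epsilon>2)"
    using open_bowen_ball[OF continuous_T] by blast
  then have "(\<Union>x\<in>F. bowen_ball T n x \<epsilon>2) \<in> sets M"
    using sets_M by simp
  moreover have "(\<Union>x\<in>F. bowen_ball T n x \<epsilon>1) \<subseteq> (\<Union>x\<in>F. bowen_ball T n x \<epsilon>2)"
    using bowen_ball_mono[OF assms(1)] by blast
  ultimately have "measure M (\<Union>x\<in>F. bowen_ball T n x \<epsilon>1) \<le> measure M (\<Union>x\<in>F. bowen_ball T n x \<epsilon>2)"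
    using prob_space.finite_measure[OF prob_space_M] by (intro finite_measure.finite_measure_mono)
  then show ?thesis using assms(2) unfolding spanning_def by auto
qed

lemma pressure_pot_n_pos:
  assumes "continuous_on UNIV (\<phi> n)" "\<epsilon> > 0" "0 \<le> \<delta>" "\<delta> < 1"
  shows "0 < pressure_pot_n M T \<phi> n \<epsilon> \<delta>"
proof -
  obtain B where B: "\<forall>x. \<bar>\<phi> n x\<bar> \<le> B"
    using compact_UNIV_continuous_bounded[OF compact_UNIV assms(1)] by blast
  show ?thesis
    unfolding pressure_pot_n_def
  proof (rule Inf_sum_exp_pos)
    show "- B \<le> \<phi> n x" for x using B[rule_format, of x] by simp
    show "finite F \<and> F \<noteq> {}" if "spanning M T n \<epsilon> \<delta> F" for F
      using that spanning_nonempty[OF assms(4) that] unfolding spanning_def by blast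
  qed (rule spanning_exists[OF assms(2,3)])
qed

lemma pressure_fun_n_pos:
  assumes "continuous_on UNIV \<psi>" "\<epsilon> > 0" "0 \<le> \<delta>" "\<delta> < 1"
  shows "0 < pressure_fun_n M T \<psi> n \<epsilon> \<delta>"
proof -
  obtain B where B: "\<And>x. \<bar>\<psi> x\<bar> \<le> B"
    using compact_UNIV_continuous_bounded[OF compact_UNIV assms(1)] by blast
  show ?thesis
    unfolding pressure_fun_n_def
  proof (rule Inf_sum_exp_pos)
    fix x
    have "\<bar>birkhoff_sum T \<psi> n x\<bar> \<le> real n * B"
      by (rule birkhoff_sum_abs_le[OF B])
    moreover have "birkhoff_sum T \<psi> n x \<le> (SUP y\<in>bowen_ball T n x \<epsilon>. birkhoff_sum T \<psi> n y)"
      by (rule birkhoff_sum_le_SUP_bowen_ball[OF B assms(2)])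
    ultimately show "- (real n * B) \<le> (SUP y\<in>bowen_ball T n x \<epsilon>. birkhoff_sum T \<psi> n y)"
      by linarith
  next
    show "finite F \<and> F \<noteq> {}" if "spanning M T n \<epsilon> \<delta> F" for F
      using that spanning_nonempty[OF assms(4) that] unfolding spanning_def by blast
  qed (rule spanning_exists[OF assms(2,3)])
qed

lemma pressure_pot_n_antimono_eps:
  assumes "0 < \<epsilon>1" "\<epsilon>1 \<le> \<epsilon>2" "0 \<le> \<delta>"
  shows "pressure_pot_n M T \<phi> n \<epsilon>2 \<delta> \<le> pressure_pot_n M T \<phi> n \<epsilon>1 \<delta>"
  unfolding pressure_pot_n_def
proof (rule Inf_sum_exp_antimono)
  show "spanning M T n \<epsilon>2 \<delta> F" if "spanning M T n \<epsilon>1 \<delta> F" for F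
    using that by (rule spanning_mono_eps[OF assms(2)])
  show "\<exists>F. spanning M T n \<epsilon>1 \<delta> F" by (rule spanning_exists[OF assms(1,3)])
qed

lemma pressure_pot_n_antimono_delta:
  assumes "0 < \<epsilon>" "0 \<le> \<delta>1" "\<delta>1 \<le> \<delta>2"
  shows "pressure_pot_n M T \<phi> n \<epsilon> \<delta>2 \<le> pressure_pot_n M T \<phi> n \<epsilon> \<delta>1"
  unfolding pressure_pot_n_def
proof (rule Inf_sum_exp_antimono)
  show "spanning M T n \<epsilon> \<delta>2 F" if "spanning M T n \<epsilon> \<delta>1 F" for F
    using that by (rule spanning_mono_delta[OF assms(3)])
  show "\<exists>F. spanning M T n \<epsilon> \<delta>1 F" by (rule spanning_exists[OF assms(1,2)])
qed

lemma pressure_fun_n_antimono_delta: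
  assumes "0 < \<epsilon>" "0 \<le> \<delta>1" "\<delta>1 \<le> \<delta>2"
  shows "pressure_fun_n M T \<psi> n \<epsilon> \<delta>2 \<le> pressure_fun_n M T \<psi> n \<epsilon> \<delta>1"
  unfolding pressure_fun_n_def
proof (rule Inf_sum_exp_antimono)
  show "spanning M T n \<epsilon> \<delta>2 F" if "spanning M T n \<epsilon> \<delta>1 F" for F
    using that by (rule spanning_mono_delta[OF assms(3)])
  show "\<exists>F. spanning M T n \<epsilon> \<delta>1 F" by (rule spanning_exists[OF assms(1,2)])
qed

lemma pressure_pot_limsup_antimono_eps:
  assumes "\<forall>n\<ge>1. continuous_on UNIV (\<phi> n)" "0 < \<epsilon>1" "\<epsilon>1 \<le> \<epsilon>2" "0 \<le> \<delta>" "\<delta> < 1"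
  shows "pressure_pot_limsup M T \<phi> \<epsilon>2 \<delta> \<le> pressure_pot_limsup M T \<phi> \<epsilon>1 \<delta>"
  unfolding pressure_pot_limsup_def using assms
  by (intro limsup_ln_div_mono pressure_pot_n_pos pressure_pot_n_antimono_eps) auto

lemma pressure_pot_limsup_antimono_delta:
  assumes "\<forall>n\<ge>1. continuous_on UNIV (\<phi> n)" "0 < \<epsilon>" "0 \<le> \<delta>1" "\<delta>1 \<le> \<delta>2" "\<delta>2 < 1"
  shows "pressure_pot_limsup M T \<phi> \<epsilon> \<delta>2 \<le> pressure_pot_limsup M T \<phi> \<epsilon> \<delta>1"
  unfolding pressure_pot_limsup_def using assms
  by (intro limsup_ln_div_mono pressure_pot_n_pos pressure_pot_n_antimono_delta) auto

lemma pressure_fun_limsup_antimono_delta: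
  assumes "continuous_on UNIV \<psi>" "0 < \<epsilon>" "0 \<le> \<delta>1" "\<delta>1 \<le> \<delta>2" "\<delta>2 < 1"
  shows "pressure_fun_limsup M T \<psi> \<epsilon> \<delta>2 \<le> pressure_fun_limsup M T \<psi> \<epsilon> \<delta>1"
  unfolding pressure_fun_limsup_def using assms
  by (intro limsup_ln_div_mono pressure_fun_n_pos pressure_fun_n_antimono_delta) auto

text \<open>\<open>Lim\<close> is a definite description, so the pressures can only be evaluated once
  the limits in their definitions are known to exist; monotonicity in \<open>\<epsilon>\<close> and \<open>\<delta>\<close> provides them.\<close>

lemma pressure_pot_eq_SUP:
  assumes "\<forall>n\<ge>1. continuous_on UNIV (\<phi> n)"
  shows "pressure_pot M T \<phi> = (SUP \<delta>\<in>{0<..<1}. SUP \<epsilon>\<in>{0<..<1}. pressure_pot_limsup M T \<phi> \<epsilon> \<delta>)"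
proof -
  define A where "A \<delta> = Lim (at_right 0) (\<lambda>\<epsilon>. pressure_pot_limsup M T \<phi> \<epsilon> \<delta>)" for \<delta>
  have A: "A \<delta> = (SUP \<epsilon>\<in>{0<..<1}. pressure_pot_limsup M T \<phi> \<epsilon> \<delta>)" if "0 < \<delta>" "\<delta> < 1" for \<delta>
    unfolding A_def using that
    by (intro Lim_at_right_0_antimono pressure_pot_limsup_antimono_eps[OF assms]) auto
  have "pressure_pot M T \<phi> = Lim (at_right 0) A"
    unfolding pressure_pot_def A_def pressure_pot_limsup_def ..
  also have "\<dots> = (SUP \<delta>\<in>{0<..<1}. A \<delta>)"
  proof (rule Lim_at_right_0_antimono)
    fix \<delta>1 \<delta>2 :: real assume \<delta>: "0 < \<delta>1" "\<delta>1 \<le> \<delta>2" "\<delta>2 < 1"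
    have "(SUP \<epsilon>\<in>{0<..<1}. pressure_pot_limsup M T \<phi> \<epsilon> \<delta>2)
        \<le> (SUP \<epsilon>\<in>{0<..<1}. pressure_pot_limsup M T \<phi> \<epsilon> \<delta>1)"
    proof (rule SUP_mono)
      fix \<epsilon> :: real assume "\<epsilon> \<in> {0<..<1}"
      then show "\<exists>\<epsilon>'\<in>{0<..<1}. pressure_pot_limsup M T \<phi> \<epsilon> \<delta>2 \<le> pressure_pot_limsup M T \<phi> \<epsilon>' \<delta>1"
        using pressure_pot_limsup_antimono_delta[OF assms, of \<epsilon> \<delta>1 \<delta>2] \<delta> by auto
    qed
    then show "A \<delta>2 \<le> A \<delta>1" using A \<delta> by simp
  qed simp
  also have "\<dots> = (SUP \<delta>\<in>{0<..<1}. SUP \<epsilon>\<in>{0<..<1}. pressure_pot_limsup M T \<phi> \<epsilon> \<delta>)"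
    using A by (intro SUP_cong) auto
  finally show ?thesis .
qed

lemma pressure_fun_eq_SUP:
  assumes "continuous_on UNIV \<psi>"
  shows "pressure_fun M T \<psi> = (SUP \<delta>\<in>{0<..<1}. Liminf (at_right 0) (\<lambda>\<epsilon>. pressure_fun_limsup M T \<psi> \<epsilon> \<delta>))"
  unfolding pressure_fun_def pressure_fun_limsup_def[symmetric]
proof (rule Lim_at_right_0_antimono)
  fix \<delta>1 \<delta>2 :: real assume \<delta>: "0 < \<delta>1" "\<delta>1 \<le> \<delta>2" "\<delta>2 < 1"
  have "\<forall>\<^sub>F \<epsilon> in at_right 0. pressure_fun_limsup M T \<psi> \<epsilon> \<delta>2 \<le> pressure_fun_limsup M T \<psi> \<epsilon> \<delta>1"
    using eventually_at_right_less[of "0::real"]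
    by eventually_elim (use pressure_fun_limsup_antimono_delta[OF assms] \<delta> in auto)
  then show "Liminf (at_right 0) (\<lambda>\<epsilon>. pressure_fun_limsup M T \<psi> \<epsilon> \<delta>2)
      \<le> Liminf (at_right 0) (\<lambda>\<epsilon>. pressure_fun_limsup M T \<psi> \<epsilon> \<delta>1)"
    by (rule Liminf_mono)
qed simp

lemma pressure_fun_le_pressure_pot:
  assumes cont_\<phi>: "\<forall>n\<ge>1. continuous_on UNIV (\<phi> n)" and cont_\<psi>: "continuous_on UNIV \<psi>"
    and "dominates_pressure_n M T \<phi> \<psi>"
  shows "pressure_fun M T \<psi> \<le> pressure_pot M T \<phi>"
proof -
  obtain C where C: "\<forall>\<eta>>0. \<exists>\<epsilon>0>0. \<forall>\<epsilon> n \<delta>. 0 < \<epsilon> \<and> \<epsilon> < \<epsilon>0 \<and> n \<ge> 1 \<and> 0 < \<delta> \<and> \<delta> < 1 \<longrightarrow>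
      pressure_pot_n M T \<phi> n \<epsilon> \<delta> \<ge> exp (- real n * \<eta> - C) * pressure_fun_n M T \<psi> n \<epsilon> \<delta>"
    using assms(3) unfolding dominates_pressure_n_def by blast
  have "Liminf (at_right 0) (\<lambda>\<epsilon>. pressure_fun_limsup M T \<psi> \<epsilon> \<delta>)
      \<le> (SUP \<epsilon>\<in>{0<..<1}. pressure_pot_limsup M T \<phi> \<epsilon> \<delta>)" if \<delta>: "0 < \<delta>" "\<delta> < 1" for \<delta>
  proof (rule Liminf_at_right_0_le_SUP)
    fix \<eta> :: real assume "\<eta> > 0"
    then obtain \<epsilon>0 where "\<epsilon>0 > 0" and \<epsilon>0: "\<forall>\<epsilon> n \<delta>. 0 < \<epsilon> \<and> \<epsilon> < \<epsilon>0 \<and> n \<ge> 1 \<and> 0 < \<delta> \<and> \<delta> < 1 \<longrightarrow>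
        pressure_pot_n M T \<phi> n \<epsilon> \<delta> \<ge> exp (- real n * \<eta> - C) * pressure_fun_n M T \<psi> n \<epsilon> \<delta>"
      using C by blast
    show "\<forall>\<^sub>F \<epsilon> in at_right 0. pressure_fun_limsup M T \<psi> \<epsilon> \<delta> \<le> pressure_pot_limsup M T \<phi> \<epsilon> \<delta> + ereal \<eta>"
      using eventually_at_right_real[OF \<open>\<epsilon>0 > 0\<close>]
    proof eventually_elim
      case (elim \<epsilon>)
      then show ?case
        unfolding pressure_fun_limsup_def pressure_pot_limsup_def
        using \<delta> \<epsilon>0 by (intro limsup_ln_div_le_add pressure_fun_n_pos[OF cont_\<psi>]) auto
    qed
  qed simp
  then show ?thesis
    unfolding pressure_fun_eq_SUP[OF cont_\<psi>] pressure_pot_eq_SUP[OF cont_\<phi>]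
    by (intro SUP_mono) (metis greaterThanLessThan_iff)
qed

lemma supadditive_potential_dominates_pressure_n:
  assumes sp: "supadditive_potential T \<phi>" and k: "k \<ge> 1"
  shows "dominates_pressure_n M T \<phi> (\<lambda>x. \<phi> k x / real k)"
proof -
  define \<psi> where "\<psi> = (\<lambda>x. \<phi> k x / real k)"
  obtain B where B: "\<forall>j\<in>{1..2 * k}. \<forall>x. \<bar>\<phi> j x\<bar> \<le> B"
    using compact_UNIV_continuous_bounded_family[OF compact_UNIV, of "{1..2 * k}" \<phi>]
      continuous_on_supadditive_potential[OF sp] by force
  have "continuous_on UNIV \<psi>"
    unfolding \<psi>_def using continuous_on_supadditive_potential[OF sp k] k by (intro continuous_intros) auto
  show ?thesis
    unfolding dominates_pressure_n_def \<psi>_def[symmetric]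
  proof (rule exI[of _ "4 * B"], intro allI impI)
    fix \<eta> :: real assume "\<eta> > 0"
    then obtain d where "d > 0" and d: "\<forall>x y. dist x y < d \<longrightarrow> \<psi> y \<le> \<psi> x + \<eta>"
      using compact_UNIV_uniform_modulus[OF compact_UNIV \<open>continuous_on UNIV \<psi>\<close>] by blast
    show "\<exists>\<epsilon>0>0. \<forall>\<epsilon> n \<delta>. 0 < \<epsilon> \<and> \<epsilon> < \<epsilon>0 \<and> n \<ge> 1 \<and> 0 < \<delta> \<and> \<delta> < 1 \<longrightarrow>
        pressure_pot_n M T \<phi> n \<epsilon> \<delta> \<ge> exp (- real n * \<eta> - 4 * B) * pressure_fun_n M T \<psi> n \<epsilon> \<delta>"
    proof (intro exI[of _ d] conjI allI impI \<open>d > 0\<close>, elim conjE)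
      fix \<epsilon> :: real and n :: nat and \<delta> :: real
      assume \<epsilon>: "0 < \<epsilon>" "\<epsilon> < d" and n: "n \<ge> 1" and \<delta>: "0 < \<delta>" "\<delta> < 1"
      have "- real n * \<eta> - 4 * B + (SUP y\<in>bowen_ball T n x \<epsilon>. birkhoff_sum T \<psi> n y) \<le> \<phi> n x" for x
      proof -
        have "(SUP y\<in>bowen_ball T n x \<epsilon>. birkhoff_sum T \<psi> n y) \<le> birkhoff_sum T \<psi> n x + real n * \<eta>"
          using d \<epsilon> by (intro SUP_birkhoff_sum_bowen_ball_le) auto
        moreover have "birkhoff_sum T \<psi> n x \<le> \<phi> n x + 4 * B"
          unfolding \<psi>_def by (rule birkhoff_sum_le_supadditive_potential[OF sp k n B])
        ultimately show ?thesis by linarith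
      qed
      then show "exp (- real n * \<eta> - 4 * B) * pressure_fun_n M T \<psi> n \<epsilon> \<delta> \<le> pressure_pot_n M T \<phi> n \<epsilon> \<delta>"
        unfolding pressure_fun_n_def pressure_pot_n_def
        using spanning_exists[OF \<epsilon>(1)] \<delta> by (intro Inf_sum_exp_shift_le) auto
    qed
  qed
qed

end

theorem lemma4p2:
  fixes T :: "'a::metric_space \<Rightarrow> 'a"
    and \<phi> :: "nat \<Rightarrow> 'a \<Rightarrow> real"
    and k :: nat
    and M :: "'a measure"
  assumes "compact (UNIV :: 'a set)"
    and "continuous_on UNIV T"
    and "supadditive_potential T \<phi>"
    and "k \<ge> 1"
    and "prob_space M"
    and "sets M = sets borel"
    and "ergodic M T"
  shows "(\<exists>C. \<forall>\<eta>>0. \<exists>\<epsilon>0>0. \<forall>\<epsilon> n \<delta>. 0 < \<epsilon> \<and> \<epsilon> < \<epsilon>0 \<and> n \<ge> 1 \<and> 0 < \<delta> \<and> \<delta> < 1 \<longrightarrow>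
            pressure_pot_n M T \<phi> n \<epsilon> \<delta> \<ge>
              exp (- real n * \<eta> - C) * pressure_fun_n M T (\<lambda>x. \<phi> k x / real k) n \<epsilon> \<delta>)
         \<and> pressure_pot M T \<phi> \<ge> pressure_fun M T (\<lambda>x. \<phi> k x / real k)"
proof -
  interpret compact_measured_system M T
    using assms(1,2,5,6) by (simp add: compact_measured_system_def)
  have comparison: "dominates_pressure_n M T \<phi> (\<lambda>x. \<phi> k x / real k)"
    by (rule supadditive_potential_dominates_pressure_n[OF assms(3,4)])
  have "continuous_on UNIV (\<lambda>x. \<phi> k x / real k)"
    using continuous_on_supadditive_potential[OF assms(3,4)] assms(4) by (intro continuous_intros) auto
  then have "pressure_fun M T (\<lambda>x. \<phi> k x / real k) \<le> pressure_pot M T \<phi>"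
    using continuous_on_supadditive_potential[OF assms(3)] comparison
    by (intro pressure_fun_le_pressure_pot) auto
  with comparison show ?thesis unfolding dominates_pressure_n_def by blast
qed

end
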